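(* Let $u:(0,\infty)\to(0,\infty)$ be a stable function bounded from above by some $u^\infty>0$. For every $x>0$ the equation $\eta=\frac{1}{\frac1x+u(\eta)}$, $\eta>0$, admits a unique solution, denoted $\eta(x)$, and the resulting mapping $\eta:(0,\infty)\to(0,\infty)$ is stable.
   Context: A function $f:(0,\infty)\to(0,\infty)$ is stable if $|f(x)-f(y)|\le\sqrt{\frac{f(x)f(y)}{xy}}|x-y|$ for all $x,y>0$. *)

theory Defs
  imports Complex_Main
begin

text \<open>A function f : (0,oo) -> (0,oo) (represented as real => real, only its values on
positive reals matter) is stable if it maps positive reals to positive reals and
|f x - f y| <= sqrt (f x f y / (x y)) |x - y| for all x, y > 0.\<close>

definition stable :: "(real \<Rightarrow> real) \<Rightarrow> bool" where
  "stable f \<longleftrightarrow> (\<forall>x>0. f x > 0) \<and>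
     (\<forall>x>0. \<forall>y>0. \<bar>f x - f y\<bar> \<le> sqrt (f x * f y / (x * y)) * \<bar>x - y\<bar>)"

end

theory Submission
  imports Defs
begin

text \<open>For positive f, stability says exactly that x f(x) is nondecreasing and f(x)/x is
nonincreasing. Stability of u squeezes u(z) between (z/x) u(x) and (x/z) u(x), so u is
continuous, and boundedness of u lets the intermediate value theorem produce a solution of
\<eta>/x + \<eta> u(\<eta>) = 1. Since \<eta> u(\<eta>) is nondecreasing, the solution \<eta>(x) is
unique and nondecreasing in x, and \<eta>(x)/x = 1 - \<eta>(x) u(\<eta>(x)) is nonincreasing;
hence \<eta> is stable again.\<close>

lemma mult_nonpos_iff_of_le:
  fixes p q :: "'a::linordered_idom"
  assumes "p \<le> q"
  shows "p * q \<le> 0 \<longleftrightarrow> p \<le> 0 \<and> 0 \<le> q"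
  using assms by (smt (verit) mult_le_0_iff order.trans)

lemma abs_diff_le_sqrt_iff:
  fixes a b x y :: real
  assumes "0 < a" "0 < b" "0 < x" "0 < y"
  shows "\<bar>a - b\<bar> \<le> sqrt (a * b / (x * y)) * \<bar>x - y\<bar>
           \<longleftrightarrow> (a * x - b * y) * (a * y - b * x) \<le> 0"
proof -
  have "sqrt (a * b / (x * y)) * \<bar>x - y\<bar> = sqrt (a * b / (x * y) * (x - y)\<^sup>2)"
    by (simp only: real_sqrt_mult real_sqrt_abs)
  then have "\<bar>a - b\<bar> \<le> sqrt (a * b / (x * y)) * \<bar>x - y\<bar>
               \<longleftrightarrow> (a - b)\<^sup>2 \<le> a * b / (x * y) * (x - y)\<^sup>2"
    by (metis real_sqrt_abs real_sqrt_le_iff)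
  also have "\<dots> \<longleftrightarrow> (a - b)\<^sup>2 * (x * y) \<le> a * b * (x - y)\<^sup>2"
    using assms by (simp add: field_simps)
  also have "\<dots> \<longleftrightarrow> (a * x - b * y) * (a * y - b * x) \<le> 0"
    by (simp add: algebra_simps power2_eq_square)
  finally show ?thesis .
qed

lemma cross_product_nonpos_iff:
  fixes a b x y :: real
  assumes "0 \<le> a" "0 \<le> b" "x \<le> y"
  shows "(a * x - b * y) * (a * y - b * x) \<le> 0 \<longleftrightarrow> a * x \<le> b * y \<and> b * x \<le> a * y"
proof -
  have "a * x - b * y \<le> a * y - b * x"
    using assms by (smt (verit) mult_left_mono)
  then show ?thesis by (simp add: mult_nonpos_iff_of_le)
qed

lemma all_pos_pairs_iff_ordered:
  fixes P :: "real \<Rightarrow> real \<Rightarrow> bool"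
  assumes "\<And>x y. P x y \<longleftrightarrow> P y x"
  shows "(\<forall>x>0. \<forall>y>0. P x y) \<longleftrightarrow> (\<forall>x>0. \<forall>y. x \<le> y \<longrightarrow> P x y)"
  using assms by (meson linorder_le_cases order.strict_trans2)

lemma stable_iff_monotone:
  "stable f \<longleftrightarrow>
     (\<forall>x>0. f x > 0) \<and> mono_on {0<..} (\<lambda>x. x * f x) \<and> antimono_on {0<..} (\<lambda>x. f x / x)"
proof (cases "\<forall>x>0. f x > 0")
  case pos: True
  let ?P = "\<lambda>x y. (f x * x - f y * y) * (f x * y - f y * x) \<le> 0"
  have "stable f \<longleftrightarrow> (\<forall>x>0. \<forall>y>0. ?P x y)"
    using pos by (simp add: stable_def abs_diff_le_sqrt_iff)
  also have "\<dots> \<longleftrightarrow> (\<forall>x>0. \<forall>y. x \<le> y \<longrightarrow> ?P x y)"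
    by (rule all_pos_pairs_iff_ordered[where P = ?P]) (simp add: algebra_simps)
  also have "\<dots> \<longleftrightarrow> (\<forall>x>0. \<forall>y. x \<le> y \<longrightarrow> x * f x \<le> y * f y \<and> f y / y \<le> f x / x)"
  proof -
    have "?P x y \<longleftrightarrow> x * f x \<le> y * f y \<and> f y / y \<le> f x / x" if "0 < x" "x \<le> y" for x y
    proof -
      have "f y / y \<le> f x / x \<longleftrightarrow> f y * x \<le> f x * y"
        using that by (simp add: field_simps)
      then show ?thesis
        using cross_product_nonpos_iff[of "f x" "f y" x y] pos that
        by (simp add: less_imp_le mult.commute)
    qed
    then show ?thesis by blast
  qed
  also have "\<dots> \<longleftrightarrow> mono_on {0<..} (\<lambda>x. x * f x) \<and> antimono_on {0<..} (\<lambda>x. f x / x)"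
    by (auto simp: monotone_on_def)
  finally show ?thesis using pos by blast
qed (auto simp: stable_def)

lemma stable_between:
  assumes "stable f" "0 < x" "0 < z"
  shows "min (z / x) (x / z) * f x \<le> f z" "f z \<le> max (z / x) (x / z) * f x"
proof -
  have mono: "mono_on {0<..} (\<lambda>x. x * f x)" and anti: "antimono_on {0<..} (\<lambda>x. f x / x)"
    using assms(1) by (simp_all add: stable_iff_monotone)
  have le: "(x / z) * f x \<le> f z \<and> f z \<le> (z / x) * f x" if "x \<le> z"
    using mono_onD[OF mono _ _ that] monotone_onD[OF anti _ _ that] assms(2,3)
    by (simp add: field_simps)
  have ge: "(z / x) * f x \<le> f z \<and> f z \<le> (x / z) * f x" if "z \<le> x"
    using mono_onD[OF mono _ _ that] monotone_onD[OF anti _ _ that] assms(2,3)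
    by (simp add: field_simps)
  show "min (z / x) (x / z) * f x \<le> f z"
    using le ge assms(2,3) by (smt (verit) frac_le)
  show "f z \<le> max (z / x) (x / z) * f x"
    using le ge assms(2,3) by (smt (verit) frac_less)
qed

lemma isCont_stable:
  assumes "stable f" "0 < x"
  shows "isCont f x"
proof -
  let ?lower = "\<lambda>z. min (z / x) (x / z) * f x" and ?upper = "\<lambda>z. max (z / x) (x / z) * f x"
  have "isCont ?lower x" "isCont ?upper x"
    using assms(2) by (auto intro!: continuous_intros)
  then have lim: "(?lower \<longlongrightarrow> f x) (at x)" "(?upper \<longlongrightarrow> f x) (at x)"
    using assms(2) by (simp_all add: isCont_def)
  have pos: "\<forall>\<^sub>F z in at x. 0 < z"
    using order_tendstoD(1)[OF tendsto_ident_at assms(2)] .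
  have bounds: "\<forall>\<^sub>F z in at x. ?lower z \<le> f z" "\<forall>\<^sub>F z in at x. f z \<le> ?upper z"
    using stable_between[OF assms] by (auto intro: eventually_mono[OF pos])
  show ?thesis
    unfolding isCont_def by (rule tendsto_sandwich[OF bounds lim])
qed

lemma eq_inverse_add_iff:
  fixes c e x :: real
  assumes "0 < x" "0 \<le> c"
  shows "e = 1 / (1 / x + c) \<longleftrightarrow> e / x + e * c = 1"
proof -
  have "1 / x + c > 0"
    using assms by (simp add: add_pos_nonneg)
  then show ?thesis
    by (auto simp: field_simps)
qed

lemma ex_pos_solution:
  fixes u :: "real \<Rightarrow> real"
  assumes "continuous_on {0<..} u" "\<forall>t>0. 0 \<le> u t \<and> u t \<le> U" "0 < U" "0 < x"
  shows "\<exists>e>0. e / x + e * u e = 1"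
proof -
  define a where "a = min (x / 2) (1 / (2 * U))"
  have a: "0 < a" "a \<le> x"
    using assms(3,4) by (simp_all add: a_def)
  have "a * u a \<le> a * U"
    using assms(2) a by (simp add: mult_left_mono)
  moreover have "a * U \<le> 1 / 2" "a / x \<le> 1 / 2"
    using assms(3,4) by (simp_all add: a_def min_def field_simps)
  ultimately have "a / x + a * u a \<le> 1"
    by linarith
  moreover have "1 \<le> x / x + x * u x"
    using assms(2,4) by simp
  moreover have "continuous_on {a..x} (\<lambda>e. e / x + e * u e)"
    using a by (intro continuous_intros continuous_on_subset[OF assms(1)]) auto
  ultimately obtain e where "a \<le> e" "e / x + e * u e = 1"
    using IVT'[of "\<lambda>e. e / x + e * u e" a 1 x] a(2) by blast
  with a(1) show ?thesis
    by (intro exI[of _ e]) auto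
qed

lemma solution_monotone:
  fixes u :: "real \<Rightarrow> real"
  assumes mono: "mono_on {0<..} (\<lambda>t. t * u t)"
    and "0 < x" "x \<le> y" "0 < a" "0 < b"
    and a: "a / x + a * u a = 1" and b: "b / y + b * u b = 1"
  shows "a \<le> b" "b / y \<le> a / x"
proof -
  show "a \<le> b"
  proof (rule ccontr)
    assume "\<not> a \<le> b"
    then have "b < a" by simp
    have "b * u b \<le> a * u a"
      using mono_onD[OF mono] \<open>b < a\<close> assms(5) by simp
    then have "a / x \<le> b / y"
      using a b by linarith
    also have "\<dots> < a / y"
      using \<open>b < a\<close> assms(2,3) by (simp add: divide_strict_right_mono)
    also have "\<dots> \<le> a / x"
      using assms(2-4) by (simp add: divide_left_mono)
    finally show False by simp
  qed
  then have "a * u a \<le> b * u b"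
    using mono_onD[OF mono] assms(4,5) by simp
  then show "b / y \<le> a / x"
    using a b by linarith
qed

lemma ex1_pos_solution:
  fixes u :: "real \<Rightarrow> real"
  assumes "stable u" "0 < U" "\<forall>t>0. u t \<le> U" "0 < x"
  shows "\<exists>!e. e > 0 \<and> e / x + e * u e = 1"
proof -
  have mono: "mono_on {0<..} (\<lambda>t. t * u t)"
    using assms(1) by (simp add: stable_iff_monotone)
  have "continuous_on {0<..} u"
    using isCont_stable[OF assms(1)] by (simp add: continuous_at_imp_continuous_on)
  moreover have "\<forall>t>0. 0 \<le> u t \<and> u t \<le> U"
    using assms(1,3) by (simp add: stable_def order.strict_implies_order)
  ultimately obtain e where e: "e > 0" "e / x + e * u e = 1"
    using ex_pos_solution[OF _ _ assms(2,4)] by blast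
  have "e' = e" if "e' > 0" "e' / x + e' * u e' = 1" for e'
    using solution_monotone(1)[OF mono assms(4) order.refl e(1) that(1) e(2) that(2)]
      solution_monotone(1)[OF mono assms(4) order.refl that(1) e(1) that(2) e(2)]
    by linarith
  with e show ?thesis
    by blast
qed

theorem proposition4:
  fixes u :: "real \<Rightarrow> real" and u_inf :: real
  assumes "stable u"
    and "u_inf > 0"
    and "\<forall>x>0. u x \<le> u_inf"
  shows "(\<forall>x>0. \<exists>!\<eta>. \<eta> > 0 \<and> \<eta> = 1 / (1 / x + u \<eta>))
         \<and> stable (\<lambda>x. THE \<eta>. \<eta> > 0 \<and> \<eta> = 1 / (1 / x + u \<eta>))"
proof -
  have pos: "\<forall>x>0. u x > 0" and mono: "mono_on {0<..} (\<lambda>t. t * u t)"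
    using assms(1) by (simp_all add: stable_iff_monotone)
  let ?sol = "\<lambda>x \<eta>. \<eta> > 0 \<and> \<eta> = 1 / (1 / x + u \<eta>)"
  have sol_iff: "?sol x e \<longleftrightarrow> e > 0 \<and> e / x + e * u e = 1" if "x > 0" for x e
    using eq_inverse_add_iff[OF that] pos by (auto simp: less_imp_le)
  have unique: "\<exists>!\<eta>. ?sol x \<eta>" if "x > 0" for x
    using ex1_pos_solution[OF assms that] by (simp only: sol_iff[OF that])
  define \<eta> where "\<eta> = (\<lambda>x. THE \<eta>. ?sol x \<eta>)"
  have \<eta>: "\<eta> x > 0" "\<eta> x / x + \<eta> x * u (\<eta> x) = 1" if "x > 0" for x
    using theI'[OF unique[OF that]] sol_iff[OF that] by (simp_all add: \<eta>_def)
  have "\<eta> x \<le> \<eta> y" "\<eta> y / y \<le> \<eta> x / x" if "0 < x" "x \<le> y" for x y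
    using solution_monotone[OF mono that] \<eta> that by simp_all
  then have "mono_on {0<..} (\<lambda>x. x * \<eta> x)" "antimono_on {0<..} (\<lambda>x. \<eta> x / x)"
    using \<eta>(1)[THEN less_imp_le] by (auto intro!: monotone_onI mult_mono)
  then have "stable \<eta>"
    using \<eta>(1) by (simp add: stable_iff_monotone)
  with unique show ?thesis
    by (simp add: \<eta>_def)
qed

end
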